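(* Let $n\ge 3$ and let $H$ be a $3$-uniform hypergraph on $[n]$ such that every $4$-subset of $[n]$ contains an edge of $H$. Let $\Delta=K(H)$ be the $2$-dimensional simplicial complex whose $2$-faces are the edges of $H$ and whose $1$-skeleton is the complete graph on $[n]$. Then $\dim_{\mathbb{Q}} H_1(\Delta;\mathbb{Q})\le n-2$.
   Context: $H_1(\Delta;\mathbb{Q})$ is the first simplicial homology group of $\Delta$ with rational coefficients. *)

theory Defs
  imports Complex_Main "HOL-Library.Function_Algebras"
begin

text \<open>A simplex is a finite set of
  natural numbers, oriented by the natural order of its vertices.\<close>

definition chains :: "nat set set \<Rightarrow> (nat set \<Rightarrow> rat) set" where
  "chains F = {c. \<forall>\<tau>. \<tau> \<notin> F \<longrightarrow> c \<tau> = 0}"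

text \<open>Simplicial boundary from chains on faces F to chains on faces G (one dimension lower):
  removing the vertex v from tau contributes sign (-1)^(position of v in sorted tau).\<close>

definition bdry :: "nat set set \<Rightarrow> nat set set \<Rightarrow> (nat set \<Rightarrow> rat) \<Rightarrow> (nat set \<Rightarrow> rat)" where
  "bdry F G c = (\<lambda>\<sigma>. if \<sigma> \<in> G then
      (\<Sum>\<tau>\<in>{\<tau>\<in>F. \<sigma> \<subset> \<tau> \<and> card \<tau> = Suc (card \<sigma>)}.
          (-1) ^ card {x\<in>\<sigma>. x < the_elem (\<tau> - \<sigma>)} * c \<tau>)
    else 0)"

definition qscale :: "rat \<Rightarrow> (nat set \<Rightarrow> rat) \<Rightarrow> (nat set \<Rightarrow> rat)" where
  "qscale a f = (\<lambda>x. a * f x)"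

definition KV :: "nat \<Rightarrow> nat set set" where
  "KV n = {{i} | i. i \<in> {1..n}}"

definition KE :: "nat \<Rightarrow> nat set set" where
  "KE n = {e. e \<subseteq> {1..n} \<and> card e = 2}"

definition cycles1 :: "nat \<Rightarrow> nat set set \<Rightarrow> (nat set \<Rightarrow> rat) set" where
  "cycles1 n H = {c \<in> chains (KE n). bdry (KE n) (KV n) c = (\<lambda>_. 0)}"

definition boundaries1 :: "nat \<Rightarrow> nat set set \<Rightarrow> (nat set \<Rightarrow> rat) set" where
  "boundaries1 n H = bdry H (KE n) ` chains H"

definition betti1 :: "nat \<Rightarrow> nat set set \<Rightarrow> nat" where
  "betti1 n H = vector_space.dim qscale (cycles1 n H) - vector_space.dim qscale (boundaries1 n H)"

end

theory Submission
  imports Defs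
begin

text \<open>
  Induct on the vertex set. The 4-set condition yields a vertex \<open>v\<close> whose link graph
  \<open>{(a, b). {v, a, b} \<in> H}\<close> has at most two components, with roots \<open>x\<^sub>1\<close>, \<open>x\<^sub>2\<close>:
  if \<open>x, y, z\<close> lie in three different components of the link of some \<open>v\<close>, then
  applying the condition to the 4-sets through \<open>v\<close> and \<open>x\<close> shows that every vertex is
  reached from \<open>y\<close> or \<open>v\<close> in the link of \<open>x\<close>.
  Walking along the link, the triangles at \<open>v\<close> express every edge \<open>{v, u}\<close>, modulo
  boundaries, the boundary \<open>w\<close> of \<open>{v, x\<^sub>1, x\<^sub>2}\<close> and edges avoiding \<open>v\<close>, as a multiple
  of \<open>{v, x\<^sub>2}\<close>; for a cycle that multiple vanishes, as one sees by evaluating the boundary at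
  \<open>v\<close>. Hence \<open>Z\<^sub>1(V) \<subseteq> span (B\<^sub>1(V) \<union> {w} \<union> Z\<^sub>1(V - {v}))\<close>: every vertex beyond the
  first two adds at most one generator to \<open>Z\<^sub>1\<close> modulo \<open>B\<^sub>1\<close>.
\<close>

interpretation Q: vector_space qscale
  by unfold_locales (auto simp: qscale_def fun_eq_iff algebra_simps)

context vector_space
begin

lemma dim_le_dim_add_card:
  assumes "finite A" "B \<subseteq> span A" "finite W" "S \<subseteq> span (B \<union> W)"
  shows "dim S \<le> dim B + card W"
proof -
  obtain C where C: "C \<subseteq> B" "independent C" "B \<subseteq> span C" "card C = dim B"
    by (rule basis_exists)
  have "finite C"
    using independent_span_bound[OF assms(1) C(2)] C(1) assms(2) by blast
  have "span (B \<union> W) \<subseteq> span (C \<union> W)"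
    using C(3) by (intro span_minimal) (auto intro: span_base span_mono[THEN subsetD])
  then have "dim S \<le> card (C \<union> W)"
    using assms(3,4) \<open>finite C\<close> by (intro dim_le_card) auto
  also have "\<dots> \<le> dim B + card W"
    using card_Un_le[of C W] C(4) by simp
  finally show ?thesis .
qed

end

section \<open>Chains and the boundary map\<close>

definition simplex_chain :: "nat set \<Rightarrow> nat set \<Rightarrow> rat" where
  "simplex_chain \<tau> = (\<lambda>\<sigma>. if \<sigma> = \<tau> then 1 else 0)"

definition incidence :: "nat set \<Rightarrow> nat set \<Rightarrow> rat" where
  "incidence \<sigma> \<tau> = (-1) ^ card {x\<in>\<sigma>. x < the_elem (\<tau> - \<sigma>)}"

lemma incidence_nonzero [simp]: "incidence \<sigma> \<tau> \<noteq> 0"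
  by (simp add: incidence_def)

lemma incidence_insert: "v \<notin> \<sigma> \<Longrightarrow> incidence \<sigma> (insert v \<sigma>) = (-1) ^ card (\<sigma> \<inter> {..<v})"
  by (simp add: incidence_def insert_Diff_if Int_def conj_commute)

lemma sum_fun_apply: "sum f A x = (\<Sum>a\<in>A. f a x)"
  by (induction A rule: infinite_finite_induct) auto

lemma bdry_add: "bdry F G (c + d) = bdry F G c + bdry F G d"
  by (auto simp: bdry_def fun_eq_iff distrib_left sum.distrib)

lemma bdry_diff: "bdry F G (c - d) = bdry F G c - bdry F G d"
  by (auto simp: bdry_def fun_eq_iff right_diff_distrib sum_subtractf)

lemma bdry_scale: "bdry F G (qscale a c) = qscale a (bdry F G c)"
  by (auto simp: bdry_def fun_eq_iff qscale_def sum_distrib_left algebra_simps)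

lemma bdry_in_chains: "bdry F G c \<in> chains G"
  by (simp add: chains_def bdry_def)

lemma subspace_kernel_bdry: "Q.subspace {c. bdry F G c = 0}"
  by (auto simp: Q.subspace_def bdry_add bdry_scale) (simp add: bdry_def fun_eq_iff)

lemma subspace_chains: "Q.subspace (chains F)"
  by (auto simp: Q.subspace_def chains_def qscale_def)

lemma span_chains [simp]: "Q.span (chains F) = chains F"
  using subspace_chains by simp

lemma span_simplex_chains:
  assumes "finite P"
  shows "Q.span (simplex_chain ` P) = chains P"
proof
  show "Q.span (simplex_chain ` P) \<subseteq> chains P"
    by (intro Q.span_minimal subspace_chains) (auto simp: simplex_chain_def chains_def)
  show "chains P \<subseteq> Q.span (simplex_chain ` P)"
  proof
    fix c assume c: "c \<in> chains P"
    have "c = (\<Sum>\<tau>\<in>P. qscale (c \<tau>) (simplex_chain \<tau>))"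
      using assms c by (auto simp: fun_eq_iff sum_fun_apply qscale_def simplex_chain_def chains_def
          if_distrib[where f="\<lambda>z. _ * z"] cong: if_cong)
    also have "\<dots> \<in> Q.span (simplex_chain ` P)"
      by (intro Q.span_sum Q.span_scale Q.span_base) auto
    finally show "c \<in> Q.span (simplex_chain ` P)" .
  qed
qed

lemma finite_facets: "finite {\<sigma>\<in>G. \<sigma> \<subset> \<tau> \<and> card \<tau> = Suc (card \<sigma>)}"
  by (cases "finite \<tau>") (auto intro: finite_subset[of _ "Pow \<tau>"])

lemma bdry_simplex_chain_apply:
  assumes "finite F" "\<tau> \<in> F"
  shows "bdry F G (simplex_chain \<tau>) \<sigma> =
    (if \<sigma> \<in> G \<and> \<sigma> \<subset> \<tau> \<and> card \<tau> = Suc (card \<sigma>) then incidence \<sigma> \<tau> else 0)"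
  using assms
  by (auto simp: bdry_def simplex_chain_def incidence_def if_distrib[where f="\<lambda>z. _ * z"] cong: if_cong)

lemma bdry_simplex_chain:
  assumes "finite F" "\<tau> \<in> F"
  shows "bdry F G (simplex_chain \<tau>) =
    (\<Sum>\<sigma>\<in>{\<sigma>\<in>G. \<sigma> \<subset> \<tau> \<and> card \<tau> = Suc (card \<sigma>)}. qscale (incidence \<sigma> \<tau>) (simplex_chain \<sigma>))"
proof
  fix s
  show "bdry F G (simplex_chain \<tau>) s =
    (\<Sum>\<sigma>\<in>{\<sigma>\<in>G. \<sigma> \<subset> \<tau> \<and> card \<tau> = Suc (card \<sigma>)}. qscale (incidence \<sigma> \<tau>) (simplex_chain \<sigma>)) s"
    unfolding bdry_simplex_chain_apply[OF assms]
    by (simp add: finite_facets sum_fun_apply qscale_def simplex_chain_def if_distrib[where f="\<lambda>z. _ * z"]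
        sum.delta' cong: if_cong)
qed

definition vertex_simplices :: "nat set \<Rightarrow> nat set set" where
  "vertex_simplices V = {{i} | i. i \<in> V}"

definition edge_simplices :: "nat set \<Rightarrow> nat set set" where
  "edge_simplices V = {e. e \<subseteq> V \<and> card e = 2}"

lemma finite_edge_simplices: "finite V \<Longrightarrow> finite (edge_simplices V)"
  unfolding edge_simplices_def by (rule finite_subset[of _ "Pow V"]) auto

lemma sorted_triple:
  fixes t :: "nat set"
  assumes "card t = 3"
  obtains a b c where "a < b" "b < c" "t = {a, b, c}"
  using assms by (metis antisym_conv3 card_3_iff insert_commute)

lemma edges_of_triangle:
  assumes "a \<noteq> b" "a \<noteq> c" "b \<noteq> c"
  shows "{\<sigma>. \<sigma> \<subset> {a, b, c} \<and> card \<sigma> = 2} = {{b, c}, {a, c}, {a, b}}"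
proof
  have "\<sigma> = {b, c} \<or> \<sigma> = {a, c} \<or> \<sigma> = {a, b}" if "\<sigma> \<subset> {a, b, c}" "card \<sigma> = 2" for \<sigma>
  proof -
    obtain x y where "\<sigma> = {x, y}" "x \<noteq> y" using \<open>card \<sigma> = 2\<close> by (meson card_2_iff)
    with that(1) show ?thesis by (auto simp: doubleton_eq_iff)
  qed
  then show "{\<sigma>. \<sigma> \<subset> {a, b, c} \<and> card \<sigma> = 2} \<subseteq> {{b, c}, {a, c}, {a, b}}" by blast
  show "{{b, c}, {a, c}, {a, b}} \<subseteq> {\<sigma>. \<sigma> \<subset> {a, b, c} \<and> card \<sigma> = 2}" using assms by auto
qed

lemma bdry_edge:
  assumes "finite F" "{p, q} \<in> F" "p \<in> V" "q \<in> V" "p < q"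
  shows "bdry F (vertex_simplices V) (simplex_chain {p, q}) = simplex_chain {q} - simplex_chain {p}"
proof -
  have "{\<sigma>\<in>vertex_simplices V. \<sigma> \<subset> {p, q} \<and> card {p, q} = Suc (card \<sigma>)} = {{p}, {q}}"
    using assms(3-5) by (auto simp: vertex_simplices_def)
  moreover have "incidence {p} {p, q} = -1" "incidence {q} {p, q} = 1"
    using assms(5) incidence_insert[of q "{p}"] incidence_insert[of p "{q}"]
    by (simp_all add: insert_commute)
  ultimately show ?thesis
    using assms by (simp add: bdry_simplex_chain fun_eq_iff qscale_def)
qed

lemma bdry_triangle:
  assumes "finite F" "{a, b, c} \<in> F" "{a, b, c} \<subseteq> V" "a < b" "b < c"
  shows "bdry F (edge_simplices V) (simplex_chain {a, b, c}) =
    simplex_chain {b, c} - simplex_chain {a, c} + simplex_chain {a, b}"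
proof -
  have "{\<sigma>\<in>edge_simplices V. \<sigma> \<subset> {a, b, c} \<and> card {a, b, c} = Suc (card \<sigma>)} = {{b, c}, {a, c}, {a, b}}"
  proof -
    have "card {a, b, c} = 3" using assms(4,5) by simp
    then have "{\<sigma>\<in>edge_simplices V. \<sigma> \<subset> {a, b, c} \<and> card {a, b, c} = Suc (card \<sigma>)} =
        {\<sigma>. \<sigma> \<subset> {a, b, c} \<and> card \<sigma> = 2}"
      using assms(3) by (auto simp: edge_simplices_def)
    also have "\<dots> = {{b, c}, {a, c}, {a, b}}" using assms(4,5) by (intro edges_of_triangle) auto
    finally show ?thesis .
  qed
  moreover have "incidence {b, c} {a, b, c} = 1" "incidence {a, c} {a, b, c} = -1"
    "incidence {a, b} {a, b, c} = 1"
    using assms(4,5) incidence_insert[of a "{b, c}"] incidence_insert[of b "{a, c}"]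
      incidence_insert[of c "{a, b}"]
    by (simp_all add: insert_commute)
  ultimately show ?thesis
    using assms by (simp add: bdry_simplex_chain doubleton_eq_iff fun_eq_iff qscale_def)
qed

lemma bdry_bdry_triangle:
  assumes "finite V" "finite F" "\<tau> \<in> F" "card \<tau> = 3" "\<tau> \<subseteq> V"
  shows "bdry (edge_simplices V) (vertex_simplices V) (bdry F (edge_simplices V) (simplex_chain \<tau>)) = 0"
proof -
  obtain a b c where abc: "a < b" "b < c" "\<tau> = {a, b, c}"
    using sorted_triple[OF assms(4)] .
  have "{a, b} \<in> edge_simplices V" "{a, c} \<in> edge_simplices V" "{b, c} \<in> edge_simplices V"
    using abc assms(5) by (auto simp: edge_simplices_def)
  then show ?thesis
    using assms abc
    by (simp add: bdry_triangle bdry_add bdry_diff bdry_edge finite_edge_simplices)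
qed

lemma bdry_bdry_triangle_chains:
  assumes "finite V" "finite H" "\<forall>\<tau>\<in>H. \<tau> \<subseteq> V \<and> card \<tau> = 3" "c \<in> chains H"
  shows "bdry (edge_simplices V) (vertex_simplices V) (bdry H (edge_simplices V) c) = 0"
proof -
  let ?K = "{c. bdry (edge_simplices V) (vertex_simplices V) (bdry H (edge_simplices V) c) = 0}"
  have "Q.subspace ?K"
    by (auto simp: Q.subspace_def bdry_add bdry_scale Q.scale_zero_right) (simp add: bdry_def fun_eq_iff)
  moreover have "simplex_chain ` H \<subseteq> ?K"
    using assms(1-3) bdry_bdry_triangle by auto
  ultimately have "Q.span (simplex_chain ` H) \<subseteq> ?K"
    by (intro Q.span_minimal)
  then show ?thesis
    using assms(2,4) span_simplex_chains by blast
qed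

lemma facet_in_span:
  assumes "finite F" "\<tau> \<in> F" "bdry F G (simplex_chain \<tau>) \<in> Q.span X"
    and "\<sigma> \<in> G" "\<sigma> \<subset> \<tau>" "card \<tau> = Suc (card \<sigma>)"
    and others: "\<And>\<rho>. \<rho> \<in> G \<Longrightarrow> \<rho> \<subset> \<tau> \<Longrightarrow> card \<tau> = Suc (card \<rho>) \<Longrightarrow> \<rho> \<noteq> \<sigma> \<Longrightarrow>
      simplex_chain \<rho> \<in> Q.span X"
  shows "simplex_chain \<sigma> \<in> Q.span X"
proof -
  let ?S = "{\<rho>\<in>G. \<rho> \<subset> \<tau> \<and> card \<tau> = Suc (card \<rho>)}"
  let ?term = "\<lambda>\<rho>. qscale (incidence \<rho> \<tau>) (simplex_chain \<rho>)"
  have "bdry F G (simplex_chain \<tau>) = sum ?term ?S"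
    by (rule bdry_simplex_chain[OF assms(1,2)])
  also have "\<dots> = ?term \<sigma> + sum ?term (?S - {\<sigma>})"
    using assms(4-6) by (intro sum.remove finite_facets) auto
  finally have "?term \<sigma> = bdry F G (simplex_chain \<tau>) - sum ?term (?S - {\<sigma>})"
    by simp
  also have "\<dots> \<in> Q.span X"
    using others by (intro Q.span_diff assms(3) Q.span_sum Q.span_scale) auto
  finally have "?term \<sigma> \<in> Q.span X" .
  then have "qscale (1 / incidence \<sigma> \<tau>) (?term \<sigma>) \<in> Q.span X"
    by (rule Q.span_scale)
  then show ?thesis
    by (simp add: qscale_def)
qed

lemma triangle_edge_in_span:
  assumes "finite F" "{a, b, c} \<in> F" "card {a, b, c} = 3" "{a, b, c} \<subseteq> V"
    and "bdry F (edge_simplices V) (simplex_chain {a, b, c}) \<in> Q.span X"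
    and "simplex_chain {a, b} \<in> Q.span X" "simplex_chain {b, c} \<in> Q.span X"
  shows "simplex_chain {a, c} \<in> Q.span X"
proof (rule facet_in_span[OF assms(1,2,5)])
  have distinct: "a \<noteq> b" "a \<noteq> c" "b \<noteq> c"
    using assms(3) by (auto simp: card_insert_if split: if_splits)
  then show "{a, c} \<in> edge_simplices V" "{a, c} \<subset> {a, b, c}" "card {a, b, c} = Suc (card {a, c})"
    using assms(3,4) by (auto simp: edge_simplices_def)
  fix \<rho> assume "\<rho> \<in> edge_simplices V" "\<rho> \<subset> {a, b, c}" "card {a, b, c} = Suc (card \<rho>)" "\<rho> \<noteq> {a, c}"
  then have "\<rho> \<in> {\<sigma>. \<sigma> \<subset> {a, b, c} \<and> card \<sigma> = 2}"
    using assms(3) by simp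
  then have "\<rho> \<in> {{b, c}, {a, c}, {a, b}}"
    unfolding edges_of_triangle[OF distinct] .
  then show "simplex_chain \<rho> \<in> Q.span X"
    using assms(6,7) \<open>\<rho> \<noteq> {a, c}\<close> by blast
qed

lemma bdry_restrict:
  assumes "finite F" "F' \<subseteq> F" "G' \<subseteq> G" "c \<in> chains F'"
    and "\<forall>\<sigma>\<in>G - G'. \<forall>\<tau>\<in>F'. \<not> \<sigma> \<subset> \<tau>"
  shows "bdry F' G' c = bdry F G c"
proof
  fix \<sigma> :: "nat set"
  let ?cof = "\<lambda>F. {\<tau>\<in>F. \<sigma> \<subset> \<tau> \<and> card \<tau> = Suc (card \<sigma>)}"
  let ?term = "\<lambda>\<tau>. incidence \<sigma> \<tau> * c \<tau>"
  have vanish: "c \<tau> = 0" if "\<tau> \<notin> F'" for \<tau>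
    using assms(4) that by (simp add: chains_def)
  have "sum ?term (?cof F') = sum ?term (?cof F)" if "\<sigma> \<in> G'"
    using assms(1,2) vanish by (intro sum.mono_neutral_left) auto
  moreover have "sum ?term (?cof F) = 0" if "\<sigma> \<in> G - G'"
    using assms(5) that vanish by (intro sum.neutral) auto
  ultimately show "bdry F' G' c \<sigma> = bdry F G c \<sigma>"
    using assms(3) by (auto simp: bdry_def incidence_def)
qed

lemma bdry_restrict_edges:
  assumes "finite V" "V' \<subseteq> V" "c \<in> chains (edge_simplices V')"
  shows "bdry (edge_simplices V') (vertex_simplices V') c = bdry (edge_simplices V) (vertex_simplices V) c"
  using assms
  by (intro bdry_restrict finite_edge_simplices) (auto simp: edge_simplices_def vertex_simplices_def)

section \<open>Cycles modulo boundaries\<close>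

definition cycle_space :: "nat set \<Rightarrow> (nat set \<Rightarrow> rat) set" where
  "cycle_space V =
    {c \<in> chains (edge_simplices V). bdry (edge_simplices V) (vertex_simplices V) c = 0}"

definition boundary_space :: "nat set \<Rightarrow> nat set set \<Rightarrow> (nat set \<Rightarrow> rat) set" where
  "boundary_space V H = bdry H (edge_simplices V) ` chains H"

text \<open>Write a cycle as \<open>\<gamma> {v, x} + y + c\<close>; at the vertex \<open>v\<close> the boundaries of \<open>y\<close>
  (a combination of cycles) and of \<open>c\<close> (which avoids \<open>v\<close>) vanish, so \<open>\<gamma> = 0\<close>.\<close>

lemma cycle_space_reduction:
  assumes "finite V" "v \<in> V" "x \<in> V - {v}"
    and cycles: "\<forall>y\<in>Y. bdry (edge_simplices V) (vertex_simplices V) y = 0"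
    and spans: "chains (edge_simplices V) \<subseteq>
      Q.span (insert (simplex_chain {v, x}) (Y \<union> chains (edge_simplices (V - {v}))))"
  shows "cycle_space V \<subseteq> Q.span (Y \<union> cycle_space (V - {v}))"
proof
  fix z assume z: "z \<in> cycle_space V"
  let ?d = "bdry (edge_simplices V) (vertex_simplices V)"
  let ?e = "simplex_chain {v, x}"
  have "z \<in> Q.span (insert ?e (Y \<union> chains (edge_simplices (V - {v}))))"
    using z spans by (auto simp: cycle_space_def)
  then obtain \<gamma> where "z - qscale \<gamma> ?e \<in> Q.span (Y \<union> chains (edge_simplices (V - {v})))"
    unfolding Q.span_breakdown_eq by blast
  then obtain y c where decomp: "z - qscale \<gamma> ?e = y + c"
    and y: "y \<in> Q.span Y" and c: "c \<in> chains (edge_simplices (V - {v}))"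
    by (auto simp: Q.span_Un)
  have "?d y = 0"
    using Q.span_minimal[OF _ subspace_kernel_bdry] cycles y by blast
  have "?d c = bdry (edge_simplices (V - {v})) (vertex_simplices (V - {v})) c"
    using bdry_restrict_edges[OF assms(1) _ c] by auto
  then have "?d c {v} = 0"
    by (simp add: bdry_def vertex_simplices_def)
  have "?d ?e {v} = incidence {v} {v, x}"
    using assms(1-3) by (subst bdry_simplex_chain_apply)
      (auto simp: finite_edge_simplices edge_simplices_def vertex_simplices_def)
  have "z = qscale \<gamma> ?e + y + c"
    using decomp by (simp add: algebra_simps)
  then have "?d z = qscale \<gamma> (?d ?e) + ?d y + ?d c"
    by (simp add: bdry_add bdry_scale)
  then have "?d z {v} = \<gamma> * incidence {v} {v, x}"
    using \<open>?d y = 0\<close> \<open>?d c {v} = 0\<close> \<open>?d ?e {v} = _\<close> by (simp add: qscale_def)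
  moreover have "?d z = 0"
    using z by (simp add: cycle_space_def)
  ultimately have "\<gamma> = 0"
    by simp
  then have "z = y + c"
    using \<open>z = qscale \<gamma> ?e + y + c\<close> by (simp add: qscale_def fun_eq_iff)
  then have "c \<in> cycle_space (V - {v})"
    using \<open>?d z = 0\<close> \<open>?d y = 0\<close> \<open>?d c = _\<close> c by (simp add: cycle_space_def bdry_add)
  moreover have "y \<in> Q.span (Y \<union> cycle_space (V - {v}))"
    using y Q.span_mono[of Y] by blast
  ultimately show "z \<in> Q.span (Y \<union> cycle_space (V - {v}))"
    using \<open>z = y + c\<close> by (simp add: Q.span_add Q.span_base)
qed

lemma boundary_space_restrict:
  assumes "finite H" "V' \<subseteq> V"
  shows "boundary_space V' {\<tau>\<in>H. \<tau> \<subseteq> V'} \<subseteq> boundary_space V H"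
proof
  fix b assume "b \<in> boundary_space V' {\<tau>\<in>H. \<tau> \<subseteq> V'}"
  then obtain c where c: "c \<in> chains {\<tau>\<in>H. \<tau> \<subseteq> V'}" and b: "b = bdry {\<tau>\<in>H. \<tau> \<subseteq> V'} (edge_simplices V') c"
    by (auto simp: boundary_space_def)
  have "b = bdry H (edge_simplices V) c"
    unfolding b using assms c by (intro bdry_restrict) (auto simp: edge_simplices_def)
  moreover have "c \<in> chains H"
    using c by (auto simp: chains_def)
  ultimately show "b \<in> boundary_space V H"
    by (simp add: boundary_space_def)
qed

section \<open>Links of vertices\<close>

definition link :: "nat set set \<Rightarrow> nat \<Rightarrow> (nat \<times> nat) set" where
  "link H v = {(a, b). {v, a, b} \<in> H}"

definition two_rooted_link :: "nat set set \<Rightarrow> nat set \<Rightarrow> nat \<Rightarrow> nat \<Rightarrow> nat \<Rightarrow> bool" where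
  "two_rooted_link H V v x1 x2 \<longleftrightarrow>
    x1 \<in> V - {v} \<and> x2 \<in> V - {v} \<and> x1 \<noteq> x2 \<and> V - {v} \<subseteq> (link H v)\<^sup>* `` {x1, x2}"

lemma triangle_in_four_set:
  assumes cover: "\<forall>S. S \<subseteq> V \<and> card S = 4 \<longrightarrow> (\<exists>e\<in>H. e \<subseteq> S)"
    and H: "\<forall>e\<in>H. card e = 3"
    and "{a, b, c, d} \<subseteq> V" "distinct [a, b, c, d]"
    and "{a, b, c} \<notin> H" "{a, b, d} \<notin> H" "{a, c, d} \<notin> H"
  shows "{b, c, d} \<in> H"
proof -
  let ?S = "{a, b, c, d}"
  have "card ?S = 4"
    using assms(4) by simp
  then obtain e where e: "e \<in> H" "e \<subseteq> ?S"
    using cover assms(3) by blast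
  have "card e = 3"
    using H e(1) by simp
  have "\<not> ?S \<subseteq> e"
  proof
    assume "?S \<subseteq> e"
    then have "card ?S \<le> card e"
      using \<open>card e = 3\<close> by (intro card_mono) (auto intro: card_ge_0_finite)
    then show False
      using \<open>card ?S = 4\<close> \<open>card e = 3\<close> by simp
  qed
  then obtain t where t: "t \<in> ?S" "t \<notin> e"
    by blast
  then have "e = ?S - {t}"
    using e(2) \<open>card e = 3\<close> \<open>card ?S = 4\<close> by (intro card_subset_eq) auto
  then show ?thesis
    using t(1) e(1) assms(4-7) by (auto simp: insert_Diff_if insert_commute)
qed

lemma four_sets_covered_restrict:
  assumes "\<forall>S. S \<subseteq> V \<and> card S = 4 \<longrightarrow> (\<exists>e\<in>H. e \<subseteq> S)" "V' \<subseteq> V"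
  shows "\<forall>S. S \<subseteq> V' \<and> card S = 4 \<longrightarrow> (\<exists>e\<in>{e\<in>H. e \<subseteq> V'}. e \<subseteq> S)"
proof (intro allI impI)
  fix S assume S: "S \<subseteq> V' \<and> card S = 4"
  then have "S \<subseteq> V"
    using assms(2) by blast
  then obtain e where "e \<in> H" "e \<subseteq> S"
    using assms(1) S by blast
  with S show "\<exists>e\<in>{e\<in>H. e \<subseteq> V'}. e \<subseteq> S"
    by blast
qed

lemma two_rooted_link_from_three_components:
  assumes cover: "\<forall>S. S \<subseteq> V \<and> card S = 4 \<longrightarrow> (\<exists>e\<in>H. e \<subseteq> S)"
    and H: "\<forall>e\<in>H. card e = 3"
    and "v \<in> V" "x \<in> V - {v}" "y \<in> V - {v}" "z \<in> V - {v}"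
    and apart: "(x, y) \<notin> (link H v)\<^sup>*" "(x, z) \<notin> (link H v)\<^sup>*" "(y, z) \<notin> (link H v)\<^sup>*"
  shows "two_rooted_link H V x y v"
proof -
  let ?C = "(link H v)\<^sup>*"
  have no_cone: "{v, p, q} \<notin> H" if "(p, q) \<notin> ?C" for p q
    using that by (auto simp: link_def)
  have four: "{b, c, d} \<in> H"
    if "{b, c, d} \<subseteq> V" "distinct [v, b, c, d]" "{v, b, c} \<notin> H" "{v, b, d} \<notin> H" "{v, c, d} \<notin> H"
    for b c d
    using triangle_in_four_set[OF cover H, of v b c d] that assms(3) by auto
  have in_link_x: "(p, q) \<in> (link H x)\<^sup>*" if "{x, p, q} \<in> H" for p q
    using that by (auto simp: link_def)
  have "x \<noteq> y" "x \<noteq> z" "y \<noteq> z"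
    using apart by auto
  then have "{x, y, z} \<in> H"
    using four[of x y z] assms(4-6) no_cone apart by auto
  have "\<exists>r\<in>{y, v}. (r, u) \<in> (link H x)\<^sup>*" if u: "u \<in> V - {x}" "u \<notin> {y, v}" for u
  proof -
    consider "{v, x, u} \<in> H" | "{v, x, u} \<notin> H" "(y, u) \<notin> ?C" | "{v, x, u} \<notin> H" "(y, u) \<in> ?C"
      by blast
    then show ?thesis
    proof cases
      case 1
      then show ?thesis
        using in_link_x[of v u] by (simp add: insert_commute)
    next
      case 2
      then have "{x, y, u} \<in> H"
        using four[of x y u] u assms(4,5) \<open>x \<noteq> y\<close> no_cone apart(1) by auto
      then show ?thesis
        using in_link_x by blast
    next
      case 3
      then have "(u, z) \<notin> ?C" "u \<noteq> z"
        using apart(3) by (auto intro: rtrancl_trans)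
      then have "{x, u, z} \<in> H"
        using four[of x u z] 3(1) u assms(4,6) \<open>x \<noteq> z\<close> no_cone apart(2) by auto
      then have "(y, z) \<in> (link H x)\<^sup>*" "(z, u) \<in> (link H x)\<^sup>*"
        using \<open>{x, y, z} \<in> H\<close> in_link_x by (auto simp: insert_commute)
      then show ?thesis
        by (meson insertI1 rtrancl_trans)
    qed
  qed
  then show ?thesis
    using assms(3-5) \<open>x \<noteq> y\<close> by (auto simp: two_rooted_link_def)
qed

lemma exists_two_rooted_link:
  assumes "finite V" "card V \<ge> 3"
    and cover: "\<forall>S. S \<subseteq> V \<and> card S = 4 \<longrightarrow> (\<exists>e\<in>H. e \<subseteq> S)"
    and H: "\<forall>e\<in>H. card e = 3"
  shows "\<exists>v\<in>V. \<exists>x1 x2. two_rooted_link H V v x1 x2"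
proof (rule ccontr)
  assume none: "\<not> ?thesis"
  obtain T where "T \<subseteq> V" "card T = 3"
    using obtain_subset_with_card_n[OF assms(2)] by blast
  then obtain v x a where "{v, x, a} \<subseteq> V" "v \<noteq> x" "v \<noteq> a" "x \<noteq> a"
    by (metis card_3_iff)
  then have "v \<in> V" "x \<in> V - {v}" "a \<in> V - {v}"
    by auto
  let ?C = "(link H v)\<^sup>*"
  have "\<not> two_rooted_link H V v x a"
    using none \<open>v \<in> V\<close> by blast
  then obtain y where y: "y \<in> V - {v}" "(x, y) \<notin> ?C"
    using \<open>x \<in> V - {v}\<close> \<open>a \<in> V - {v}\<close> \<open>x \<noteq> a\<close> by (auto simp: two_rooted_link_def)
  then have "x \<noteq> y"
    by auto
  have "\<not> two_rooted_link H V v x y"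
    using none \<open>v \<in> V\<close> by blast
  then obtain z where "z \<in> V - {v}" "(x, z) \<notin> ?C" "(y, z) \<notin> ?C"
    using \<open>x \<in> V - {v}\<close> y(1) \<open>x \<noteq> y\<close> by (auto simp: two_rooted_link_def)
  then have "two_rooted_link H V x y v"
    using two_rooted_link_from_three_components[OF cover H \<open>v \<in> V\<close> \<open>x \<in> V - {v}\<close> y(1)] y(2) by blast
  then show False
    using none \<open>x \<in> V - {v}\<close> by blast
qed

section \<open>Induction on the vertex set\<close>

lemma cone_edge_in_span_along_link:
  assumes "finite H" and H: "\<forall>\<tau>\<in>H. \<tau> \<subseteq> V \<and> card \<tau> = 3"
    and boundaries: "boundary_space V H \<subseteq> Q.span X"
    and away: "\<And>e. e \<subseteq> V - {v} \<Longrightarrow> card e = 2 \<Longrightarrow> simplex_chain e \<in> Q.span X"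
    and "(r, u) \<in> (link H v)\<^sup>*" "simplex_chain {v, r} \<in> Q.span X"
  shows "simplex_chain {v, u} \<in> Q.span X"
  using assms(5)
proof (induction rule: rtrancl_induct)
  case base
  show ?case
    by (rule assms(6))
next
  case (step y u)
  show ?case
  proof (rule triangle_edge_in_span[where b = y])
    show "{v, y, u} \<in> H"
      using step(2) by (simp add: link_def)
    then show "card {v, y, u} = 3" "{v, y, u} \<subseteq> V"
      using H by auto
    then have "v \<notin> {y, u}" "y \<noteq> u"
      by (auto simp: card_insert_if split: if_splits)
    then show "simplex_chain {y, u} \<in> Q.span X"
      using \<open>{v, y, u} \<subseteq> V\<close> by (intro away) auto
    have "simplex_chain {v, y, u} \<in> chains H"
      using \<open>{v, y, u} \<in> H\<close> by (simp add: chains_def simplex_chain_def)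
    then show "bdry H (edge_simplices V) (simplex_chain {v, y, u}) \<in> Q.span X"
      using boundaries by (auto simp: boundary_space_def)
  qed (use \<open>finite H\<close> step(3) in auto)
qed

lemma edge_chains_in_span_via_link:
  assumes "finite V" and H: "\<forall>\<tau>\<in>H. \<tau> \<subseteq> V \<and> card \<tau> = 3" and "v \<in> V"
    and roots: "two_rooted_link H V v x1 x2"
  shows "chains (edge_simplices V) \<subseteq> Q.span (insert (simplex_chain {v, x2})
    (insert (bdry {{v, x2, x1}} (edge_simplices V) (simplex_chain {v, x2, x1})) (boundary_space V H)
      \<union> chains (edge_simplices (V - {v}))))"
    (is "_ \<subseteq> Q.span ?X")
proof -
  have away: "simplex_chain e \<in> Q.span ?X" if "e \<subseteq> V - {v}" "card e = 2" for e
    using that by (intro Q.span_base) (auto simp: chains_def simplex_chain_def edge_simplices_def)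
  have root2: "simplex_chain {v, x2} \<in> Q.span ?X"
    by (intro Q.span_base) simp
  have root1: "simplex_chain {v, x1} \<in> Q.span ?X"
  proof (rule triangle_edge_in_span[where b = x2])
    show "card {v, x2, x1} = 3" "{v, x2, x1} \<subseteq> V"
      using roots assms(3) by (auto simp: two_rooted_link_def)
    show "bdry {{v, x2, x1}} (edge_simplices V) (simplex_chain {v, x2, x1}) \<in> Q.span ?X"
      by (intro Q.span_base) simp
    show "simplex_chain {x2, x1} \<in> Q.span ?X"
      using roots by (intro away) (auto simp: two_rooted_link_def)
  qed (use root2 in auto)
  have "finite H"
    using H assms(1) by (intro finite_subset[of H "Pow V"]) auto
  moreover have "boundary_space V H \<subseteq> Q.span ?X"
    by (auto intro: Q.span_base)
  ultimately have reach: "simplex_chain {v, u} \<in> Q.span ?X"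
    if "(r, u) \<in> (link H v)\<^sup>*" "simplex_chain {v, r} \<in> Q.span ?X" for r u
    using cone_edge_in_span_along_link[OF _ H _ away that] by blast
  have "simplex_chain e \<in> Q.span ?X" if e: "e \<in> edge_simplices V" for e
  proof (cases "v \<in> e")
    case True
    obtain a b where "e = {a, b}" "a \<noteq> b"
      using e by (auto simp: edge_simplices_def card_2_iff)
    then obtain u where u: "e = {v, u}" "u \<in> V - {v}"
      using True e by (auto simp: edge_simplices_def insert_commute)
    then obtain r where "r \<in> {x1, x2}" "(r, u) \<in> (link H v)\<^sup>*"
      using roots by (auto simp: two_rooted_link_def)
    then show ?thesis
      using reach root1 root2 u(1) by auto
  next
    case False
    then show ?thesis
      using e away by (auto simp: edge_simplices_def)
  qed
  then show ?thesis
    using span_simplex_chains[OF finite_edge_simplices[OF assms(1)]]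
    by (metis Q.span_minimal Q.subspace_span image_subsetI)
qed

lemma cycle_space_step:
  assumes "finite V" "\<forall>\<tau>\<in>H. \<tau> \<subseteq> V \<and> card \<tau> = 3" "v \<in> V" "two_rooted_link H V v x1 x2"
  shows "\<exists>w. cycle_space V \<subseteq> Q.span (insert w (boundary_space V H) \<union> cycle_space (V - {v}))"
proof
  let ?T = "{v, x2, x1}"
  show "cycle_space V \<subseteq> Q.span (insert (bdry {?T} (edge_simplices V) (simplex_chain ?T))
    (boundary_space V H) \<union> cycle_space (V - {v}))"
  proof (rule cycle_space_reduction[OF assms(1,3)])
    show "x2 \<in> V - {v}"
      using assms(4) by (simp add: two_rooted_link_def)
    have "card ?T = 3" "?T \<subseteq> V"
      using assms(3,4) by (auto simp: two_rooted_link_def)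
    moreover have "finite H"
      using assms(1,2) by (intro finite_subset[of H "Pow V"]) auto
    ultimately show "\<forall>y\<in>insert (bdry {?T} (edge_simplices V) (simplex_chain ?T)) (boundary_space V H).
        bdry (edge_simplices V) (vertex_simplices V) y = 0"
      using assms(1,2) bdry_bdry_triangle[of V "{?T}" ?T] bdry_bdry_triangle_chains[of V H]
      by (auto simp: boundary_space_def)
  qed (rule edge_chains_in_span_via_link[OF assms])
qed

lemma cycle_space_two_vertices:
  assumes "card V = 2"
  shows "cycle_space V \<subseteq> {0}"
proof -
  obtain v x where V: "V = {v, x}" "v \<noteq> x"
    using assms by (meson card_2_iff)
  have "edge_simplices V = {{v, x}}"
    using assms card_subset_eq[of V] by (auto simp: edge_simplices_def V(1))
  then have "chains (edge_simplices V) \<subseteq>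
      Q.span (insert (simplex_chain {v, x}) ({} \<union> chains (edge_simplices (V - {v}))))"
    using span_simplex_chains[of "edge_simplices V"] Q.span_mono[of "{simplex_chain {v, x}}"] by auto
  then have "cycle_space V \<subseteq> Q.span ({} \<union> cycle_space (V - {v}))"
    using V by (intro cycle_space_reduction) auto
  moreover have "edge_simplices (V - {v}) = {}"
    using V by (auto simp: edge_simplices_def subset_singleton_iff)
  then have "cycle_space (V - {v}) \<subseteq> {0}"
    by (auto simp: cycle_space_def chains_def)
  ultimately show ?thesis
    using Q.span_mono[of "cycle_space (V - {v})" "{0}"] by (simp add: Q.span_insert_0)
qed

lemma cycle_space_spanned_by_boundaries:
  assumes "finite V" "card V = n + 2"
    and H: "\<forall>e\<in>H. e \<subseteq> V \<and> card e = 3"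
    and cover: "\<forall>S. S \<subseteq> V \<and> card S = 4 \<longrightarrow> (\<exists>e\<in>H. e \<subseteq> S)"
  shows "\<exists>W. finite W \<and> card W \<le> n \<and> cycle_space V \<subseteq> Q.span (boundary_space V H \<union> W)"
  using assms
proof (induction n arbitrary: V H)
  case 0
  then have "cycle_space V \<subseteq> {0}"
    by (intro cycle_space_two_vertices) simp
  then have "cycle_space V \<subseteq> Q.span (boundary_space V H \<union> {})"
    using Q.span_zero by blast
  then show ?case
    by (intro exI[of _ "{}"]) simp
next
  case (Suc n)
  obtain v x1 x2 where "v \<in> V" and roots: "two_rooted_link H V v x1 x2"
    using exists_two_rooted_link[OF Suc.prems(1) _ Suc.prems(4)] Suc.prems(2,3) by fastforce
  obtain w where w: "cycle_space V \<subseteq> Q.span (insert w (boundary_space V H) \<union> cycle_space (V - {v}))"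
    using cycle_space_step[OF Suc.prems(1,3) \<open>v \<in> V\<close> roots] by blast
  let ?H' = "{e\<in>H. e \<subseteq> V - {v}}"
  have "\<forall>S. S \<subseteq> V - {v} \<and> card S = 4 \<longrightarrow> (\<exists>e\<in>?H'. e \<subseteq> S)"
    using Suc.prems(4) by (rule four_sets_covered_restrict) blast
  moreover have "finite (V - {v})" "card (V - {v}) = n + 2"
    using Suc.prems(1,2) \<open>v \<in> V\<close> by simp_all
  moreover have "\<forall>e\<in>?H'. e \<subseteq> V - {v} \<and> card e = 3"
    using Suc.prems(3) by blast
  ultimately obtain W' where W': "finite W'" "card W' \<le> n"
    "cycle_space (V - {v}) \<subseteq> Q.span (boundary_space (V - {v}) ?H' \<union> W')"
    using Suc.IH[of "V - {v}" ?H'] by blast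
  have "finite H"
    using Suc.prems(1,3) by (intro finite_subset[of H "Pow V"]) auto
  then have "boundary_space (V - {v}) ?H' \<union> W' \<subseteq> Q.span (boundary_space V H \<union> insert w W')"
    using boundary_space_restrict[of H "V - {v}" V] by (auto intro: Q.span_base)
  then have "cycle_space (V - {v}) \<subseteq> Q.span (boundary_space V H \<union> insert w W')"
    using W'(3) by (meson Q.span_minimal Q.subspace_span subset_trans)
  moreover have "insert w (boundary_space V H) \<subseteq> Q.span (boundary_space V H \<union> insert w W')"
    by (auto intro: Q.span_base)
  ultimately have "cycle_space V \<subseteq> Q.span (boundary_space V H \<union> insert w W')"
    using w by (meson Q.span_minimal Q.subspace_span Un_least subset_trans)
  then show ?case
    using W'(1,2) by (intro exI[of _ "insert w W'"]) (auto simp: card_insert_if)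
qed

theorem mainTheorem10:
  fixes n :: nat and H :: "nat set set"
  assumes "n \<ge> 3"
    and "\<forall>e\<in>H. e \<subseteq> {1..n} \<and> card e = 3"
    and "\<forall>S. S \<subseteq> {1..n} \<and> card S = 4 \<longrightarrow> (\<exists>e\<in>H. e \<subseteq> S)"
  shows "betti1 n H \<le> n - 2"
proof -
  have edges: "KE n = edge_simplices {1..n}"
    by (simp add: KE_def edge_simplices_def)
  have cycles: "cycles1 n H = cycle_space {1..n}"
    by (simp add: cycles1_def cycle_space_def edges KV_def vertex_simplices_def zero_fun_def)
  have boundaries: "boundaries1 n H = boundary_space {1..n} H"
    by (simp add: boundaries1_def boundary_space_def edges)
  have "card {1..n} = (n - 2) + 2"
    using assms(1) by simp
  then obtain W where W: "finite W" "card W \<le> n - 2"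
    "cycle_space {1..n} \<subseteq> Q.span (boundary_space {1..n} H \<union> W)"
    using cycle_space_spanned_by_boundaries[OF finite_atLeastAtMost _ assms(2,3)] by blast
  have "boundary_space {1..n} H \<subseteq> Q.span (simplex_chain ` edge_simplices {1..n})"
    using span_simplex_chains[OF finite_edge_simplices] bdry_in_chains
    by (auto simp: boundary_space_def)
  then have "Q.dim (cycle_space {1..n}) \<le> Q.dim (boundary_space {1..n} H) + card W"
    using finite_edge_simplices W(1,3) by (intro Q.dim_le_dim_add_card) auto
  then have "Q.dim (cycle_space {1..n}) \<le> Q.dim (boundary_space {1..n} H) + (n - 2)"
    using W(2) by linarith
  then show ?thesis
    by (simp add: betti1_def cycles boundaries)
qed

end
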